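(* Let $f:\mathbb{R}^n\to\mathbb{R}$ be convex, differentiable and bounded from below, with $\nabla f$ being $L$-Lipschitz continuous ($L>0$), let $\lambda>0$, and let $H(x)=f(x)+\lambda\|x\|_0$. Let $\{x_k\},\{y_k\}$ be generated by the VMEPIHT method described in the context. Then: (1) the sequence $\{H(x_k)\}$ is non-increasing; (2) $\sum_{k=1}^\infty\|x_k-y_k\|^2<\infty$, and in particular $\|x_k-y_k\|\to 0$; (3) the index set $I(x_k)$ changes only finitely often, i.e. there is $K$ such that $I(x_k)=I(x_K)$ for all $k\geq K$.
   Context: $\|x\|_0$ denotes the number of nonzero components of $x\in\mathbb{R}^n$. For $x\in\mathbb{R}^n$, $I(x):=\{i: x_i=0\}$. For an index set $I\subseteq\{1,\dots,n\}$, $C_I:=\{x\in\mathbb{R}^n: x_i=0 \text{ for all } i\in I\}$, and $P_C(x)=\arg\min_{z\in C}\frac12\|z-x\|^2$ is the Euclidean projection onto $C$. VMEPIHT method: fix parameters $\mu>0$, $\lambda>0$ and a starting point $y_0\in\mathbb{R}^n$. For $k=0,1,2,\dots$: choose $x_k\in\arg\min_{x\in\mathbb{R}^n}\ \lambda\|x\|_0+\frac{L}{2}\|x-y_k+\frac1L\nabla f(y_k)\|^2+\frac{\mu}{2}\|x-y_k\|^2$; then choose a symmetric positive definite matrix $H_k$ and a step length $\alpha_k\ge 0$, and set $y_{k+1}=P_{C_{I(x_k)}}(x_k-\alpha_kH_k\nabla f(x_k))$, where $\alpha_k$ is chosen so that $f(y_{k+1})\leq f(x_k)$. *)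

theory Defs
  imports "HOL-Analysis.Analysis"
begin

definition l0norm :: "real ^ 'n \<Rightarrow> nat" where
  "l0norm x = card {i. x $ i \<noteq> 0}"

definition zero_idx :: "real ^ 'n \<Rightarrow> 'n set" where
  "zero_idx x = {i. x $ i = 0}"

definition coord_sub :: "'n set \<Rightarrow> (real ^ 'n) set" where
  "coord_sub I = {x. \<forall>i\<in>I. x $ i = 0}"

end

theory Submission
  imports Defs
begin

text \<open>
  By the descent lemma, comparing the proximal subproblem for \<open>x\<^sub>k\<close> with the competitor
  \<open>z = y\<^sub>k\<close> gives \<open>H(x\<^sub>k) + \<mu>/2 \<parallel>x\<^sub>k - y\<^sub>k\<parallel>\<^sup>2 \<le> H(y\<^sub>k)\<close>, while the projection onto \<open>C\<^bsub>I(x\<^sub>k)\<^esub>\<close>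
  keeps every zero of \<open>x\<^sub>k\<close> and does not increase \<open>f\<close>, so \<open>H(y\<^sub>k\<^sub>+\<^sub>1) \<le> H(x\<^sub>k)\<close>. Hence \<open>H(x\<^sub>k)\<close>
  decreases, and since \<open>H\<close> is bounded below the decrements \<open>\<mu>/2 \<parallel>x\<^sub>k - y\<^sub>k\<parallel>\<^sup>2\<close> are summable.
  Comparing \<open>x\<^sub>k\<close> with itself with one nonzero coordinate deleted or doubled shows that
  every nonzero coordinate satisfies \<open>\<lambda> \<le> (L + \<mu>) (x\<^sub>k)\<^sub>i\<^sup>2\<close>. Once \<open>\<parallel>x\<^sub>k - y\<^sub>k\<parallel>\<close> is below this
  threshold, a zero of \<open>x\<^sub>k\<close>, inherited by \<open>y\<^sub>k\<^sub>+\<^sub>1\<close>, must remain a zero of \<open>x\<^sub>k\<^sub>+\<^sub>1\<close>; an eventually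
  increasing sequence of subsets of a finite index set is eventually constant.
\<close>

lemma descent_lemma:
  fixes f :: "'a::real_inner \<Rightarrow> real" and grad :: "'a \<Rightarrow> 'a"
  assumes grad: "\<And>z. (f has_derivative (\<lambda>h. grad z \<bullet> h)) (at z)"
    and lipschitz: "\<And>u v. norm (grad u - grad v) \<le> L * norm (u - v)"
  shows "f x \<le> f y + grad y \<bullet> (x - y) + L / 2 * (norm (x - y))\<^sup>2"
proof -
  define d where "d = x - y"
  define phi where "phi t = f (y + t *\<^sub>R d) - t * (grad y \<bullet> d) - L / 2 * t\<^sup>2 * (norm d)\<^sup>2" for t
  have phi_deriv: "DERIV phi t :> (grad (y + t *\<^sub>R d) \<bullet> d - grad y \<bullet> d - L * t * (norm d)\<^sup>2)" for t
  proof -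
    have "((\<lambda>t. y + t *\<^sub>R d) has_derivative (\<lambda>h. h *\<^sub>R d)) (at t)"
      by (auto intro!: derivative_eq_intros)
    from has_derivative_compose[OF this grad]
    have "((\<lambda>t. f (y + t *\<^sub>R d)) has_real_derivative (grad (y + t *\<^sub>R d) \<bullet> d)) (at t)"
      by (simp add: has_field_derivative_def mult.commute[of _ "grad (y + t *\<^sub>R d) \<bullet> d"])
    then show ?thesis unfolding phi_def
      by (auto intro!: derivative_eq_intros)
  qed
  have "phi 1 \<le> phi 0"
  proof (rule DERIV_nonpos_imp_nonincreasing[of 0 1 phi])
    fix t :: real assume t: "0 \<le> t" "t \<le> 1"
    have "grad (y + t *\<^sub>R d) \<bullet> d - grad y \<bullet> d = (grad (y + t *\<^sub>R d) - grad y) \<bullet> d"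
      by (simp add: inner_diff_left)
    also have "\<dots> \<le> norm (grad (y + t *\<^sub>R d) - grad y) * norm d"
      using norm_cauchy_schwarz by blast
    also have "\<dots> \<le> L * norm (t *\<^sub>R d) * norm d"
      using lipschitz[of "y + t *\<^sub>R d" y] by (simp add: mult_right_mono)
    also have "\<dots> = L * t * (norm d)\<^sup>2"
      using t by (simp add: power2_eq_square)
    finally show "\<exists>D. DERIV phi t :> D \<and> D \<le> 0"
      using phi_deriv by fastforce
  qed simp
  then show ?thesis unfolding phi_def d_def by simp
qed

lemma proximal_gradient_sufficient_decrease:
  fixes f :: "'a::real_inner \<Rightarrow> real" and grad :: "'a \<Rightarrow> 'a"
  assumes grad: "\<And>z. (f has_derivative (\<lambda>h. grad z \<bullet> h)) (at z)"
    and lipschitz: "\<And>u v. norm (grad u - grad v) \<le> L * norm (u - v)"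
    and L_pos: "L > 0"
    and beats_y: "p + L / 2 * (norm (x - y + (1 / L) *\<^sub>R grad y))\<^sup>2 + mu / 2 * (norm (x - y))\<^sup>2
      \<le> q + L / 2 * (norm ((1 / L) *\<^sub>R grad y))\<^sup>2"
  shows "f x + p + mu / 2 * (norm (x - y))\<^sup>2 \<le> f y + q"
proof -
  have expand: "L / 2 * (norm (x - y + (1 / L) *\<^sub>R grad y))\<^sup>2
      = L / 2 * (norm (x - y))\<^sup>2 + grad y \<bullet> (x - y) + L / 2 * (norm ((1 / L) *\<^sub>R grad y))\<^sup>2"
    using L_pos unfolding power2_norm_eq_inner
    by (simp add: inner_add_left inner_add_right inner_commute algebra_simps)
  show ?thesis
    using beats_y descent_lemma[OF grad lipschitz, of x y] unfolding expand by linarith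
qed

lemma norm_add_scaleR_axis_squared:
  fixes v :: "real ^ 'n"
  shows "(norm (v + s *\<^sub>R axis i 1))\<^sup>2 = (norm v)\<^sup>2 + 2 * s * (v $ i) + s\<^sup>2"
  unfolding power2_norm_eq_inner
  by (simp add: inner_add_left inner_add_right inner_commute inner_axis_axis inner_axis
      power2_eq_square algebra_simps)

lemma l0_proximal_minimizer_threshold:
  fixes x b g :: "real ^ 'n"
  assumes minimal: "\<And>z.
      lam * real (l0norm x) + L / 2 * (norm (x - b + g))\<^sup>2 + mu / 2 * (norm (x - b))\<^sup>2
      \<le> lam * real (l0norm z) + L / 2 * (norm (z - b + g))\<^sup>2 + mu / 2 * (norm (z - b))\<^sup>2"
    and nonzero: "x $ i \<noteq> 0"
  shows "lam \<le> (L + mu) * (x $ i)\<^sup>2"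
proof -
  define p where "p = x $ i"
  have competitor: "lam * real (l0norm x) \<le> lam * real (l0norm (x + s *\<^sub>R axis i 1))
      + L / 2 * (2 * s * (x - b + g) $ i + s\<^sup>2) + mu / 2 * (2 * s * (x - b) $ i + s\<^sup>2)" for s
  proof -
    have "x + s *\<^sub>R axis i 1 - b + g = (x - b + g) + s *\<^sub>R axis i 1"
      and "x + s *\<^sub>R axis i 1 - b = (x - b) + s *\<^sub>R axis i 1"
      by (simp_all add: algebra_simps)
    then show ?thesis
      using minimal[of "x + s *\<^sub>R axis i 1"]
        norm_add_scaleR_axis_squared[of "x - b + g" s i] norm_add_scaleR_axis_squared[of "x - b" s i]
      by (simp only:) (simp add: distrib_left)
  qed
  have support_delete: "{j. (x + (- p) *\<^sub>R axis i 1) $ j \<noteq> 0} = {j. x $ j \<noteq> 0} - {i}"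
    unfolding p_def by (auto simp: axis_def)
  have support_double: "{j. (x + p *\<^sub>R axis i 1) $ j \<noteq> 0} = {j. x $ j \<noteq> 0}"
    using nonzero unfolding p_def by (auto simp: axis_def)
  have "0 < card {j. x $ j \<noteq> 0}"
    using nonzero by (auto simp: card_gt_0_iff)
  then have delete: "real (l0norm (x + (- p) *\<^sub>R axis i 1)) = real (l0norm x) - 1"
    unfolding l0norm_def support_delete using nonzero
    by (simp add: card_Diff_singleton of_nat_diff Suc_le_eq)
  have "lam \<le> L / 2 * (p\<^sup>2 - 2 * p * (x - b + g) $ i) + mu / 2 * (p\<^sup>2 - 2 * p * (x - b) $ i)"
    using competitor[of "- p"] unfolding delete by (simp add: algebra_simps)
  moreover have "l0norm (x + p *\<^sub>R axis i 1) = l0norm x"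
    unfolding l0norm_def support_double ..
  with competitor[of p]
  have "0 \<le> L / 2 * (2 * p * (x - b + g) $ i + p\<^sup>2) + mu / 2 * (2 * p * (x - b) $ i + p\<^sup>2)"
    by simp
  moreover have "L / 2 * (p\<^sup>2 - 2 * p * (x - b + g) $ i) + mu / 2 * (p\<^sup>2 - 2 * p * (x - b) $ i)
      + (L / 2 * (2 * p * (x - b + g) $ i + p\<^sup>2) + mu / 2 * (2 * p * (x - b) $ i + p\<^sup>2))
      = (L + mu) * p\<^sup>2"
    by (simp add: algebra_simps)
  ultimately show ?thesis
    unfolding p_def by linarith
qed

lemma mem_coord_sub_iff: "z \<in> coord_sub I \<longleftrightarrow> I \<subseteq> zero_idx z"
  unfolding coord_sub_def zero_idx_def by auto

lemma zero_idx_closest_point_coord_sub: "I \<subseteq> zero_idx (closest_point (coord_sub I) v)"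
proof -
  have "coord_sub I = (\<Inter>i\<in>I. {z. z $ i = 0})"
    unfolding coord_sub_def by auto
  then have "closed (coord_sub I)"
    by (simp add: closed_INT closed_Collect_eq continuous_on_const continuous_on_component)
  moreover have "coord_sub I \<noteq> {}"
    using mem_coord_sub_iff[of 0 I] by (auto simp: zero_idx_def)
  ultimately show ?thesis
    using closest_point_in_set mem_coord_sub_iff by blast
qed

lemma l0norm_antimono: "zero_idx x \<subseteq> zero_idx z \<Longrightarrow> l0norm z \<le> l0norm x"
  unfolding l0norm_def zero_idx_def by (intro card_mono) auto

lemma l0norm_closest_point_coord_sub_le:
  "l0norm (closest_point (coord_sub (zero_idx x)) v) \<le> l0norm x"
  by (rule l0norm_antimono[OF zero_idx_closest_point_coord_sub])

lemma zero_idx_subset_if_close: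
  fixes x y :: "real ^ 'n"
  assumes large: "\<And>i. x $ i \<noteq> 0 \<Longrightarrow> \<delta> \<le> (x $ i)\<^sup>2"
    and close: "(norm (x - y))\<^sup>2 < \<delta>"
  shows "zero_idx y \<subseteq> zero_idx x"
proof
  fix i assume "i \<in> zero_idx y"
  then have "(x $ i)\<^sup>2 = \<bar>(x - y) $ i\<bar>\<^sup>2"
    by (simp add: zero_idx_def)
  also have "\<dots> \<le> (norm (x - y))\<^sup>2"
    by (intro power_mono component_le_norm_cart) simp
  finally show "i \<in> zero_idx x"
    using large[of i] close by (auto simp: zero_idx_def)
qed

lemma summable_decrements_bounded_below:
  fixes H d :: "nat \<Rightarrow> real"
  assumes nonneg: "\<And>k. 0 \<le> d k"
    and decrease: "\<And>k. H (Suc k) + d k \<le> H k"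
    and bounded: "\<And>k. m \<le> H k"
  shows "summable d"
proof (rule summableI_nonneg_bounded[OF nonneg])
  fix n
  have "(\<Sum>k<n. d k) \<le> (\<Sum>k<n. H k - H (Suc k))"
    using decrease by (intro sum_mono) (simp add: algebra_simps)
  also have "\<dots> = H 0 - H n"
    by (simp add: sum_lessThan_telescope')
  finally show "(\<Sum>k<n. d k) \<le> H 0 - m"
    using bounded[of n] by linarith
qed

lemma eventually_incseq_finite_stabilizes:
  fixes A :: "nat \<Rightarrow> 'a::finite set"
  assumes incr: "\<And>k. N \<le> k \<Longrightarrow> A k \<subseteq> A (Suc k)"
  shows "\<exists>K. \<forall>k\<ge>K. A k = A K"
proof -
  have mono: "A k \<subseteq> A k'" if "N \<le> k" "k \<le> k'" for k k'
    by (rule lift_Suc_mono_le_ivl[of "{N..}" A]) (use incr that in auto)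
  have "finite (card ` A ` {N..})"
    by (rule finite_subset[of _ "{..CARD('a)}"]) (auto simp: card_mono)
  then obtain K where K: "N \<le> K" "\<And>k. N \<le> k \<Longrightarrow> card (A k) \<le> card (A K)"
    using Max_in[of "card ` A ` {N..}"] Max_ge[of "card ` A ` {N..}"] by fastforce
  have "A K = A k" if "K \<le> k" for k
    using card_seteq[OF finite mono[of K k]] K that by simp
  then show ?thesis by metis
qed

lemma zero_idx_eventually_constant:
  fixes x y :: "nat \<Rightarrow> real ^ 'n"
  assumes \<delta>_pos: "\<delta> > 0"
    and large: "\<And>k i. x k $ i \<noteq> 0 \<Longrightarrow> \<delta> \<le> (x k $ i)\<^sup>2"
    and inherited: "\<And>k. zero_idx (x k) \<subseteq> zero_idx (y (Suc k))"
    and close: "(\<lambda>k. norm (x k - y k)) \<longlonglongrightarrow> 0"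
  shows "\<exists>K. \<forall>k\<ge>K. zero_idx (x k) = zero_idx (x K)"
proof -
  have "(\<lambda>k. (norm (x (Suc k) - y (Suc k)))\<^sup>2) \<longlonglongrightarrow> 0"
    using tendsto_power[OF LIMSEQ_Suc[OF close], of 2] by simp
  from order_tendstoD(2)[OF this \<delta>_pos]
  obtain N where "\<And>k. N \<le> k \<Longrightarrow> (norm (x (Suc k) - y (Suc k)))\<^sup>2 < \<delta>"
    by (auto simp: eventually_sequentially)
  then have "zero_idx (x k) \<subseteq> zero_idx (x (Suc k))" if "N \<le> k" for k
    using inherited[of k] zero_idx_subset_if_close[OF large] that by blast
  then show ?thesis
    by (rule eventually_incseq_finite_stabilizes)
qed

theorem lemma4:
  fixes f :: "real ^ 'n \<Rightarrow> real"
    and grad :: "real ^ 'n \<Rightarrow> real ^ 'n"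
    and L lam mu :: real
    and x y :: "nat \<Rightarrow> real ^ 'n"
    and Hm :: "nat \<Rightarrow> real ^ 'n ^ 'n"
    and alpha :: "nat \<Rightarrow> real"
  assumes convex: "convex_on UNIV f"
    and grad: "\<And>z. (f has_derivative (\<lambda>h. grad z \<bullet> h)) (at z)"
    and bdd_below: "\<exists>m. \<forall>z. m \<le> f z"
    and L_pos: "L > 0"
    and lipschitz: "\<And>u v. norm (grad u - grad v) \<le> L * norm (u - v)"
    and lam_pos: "lam > 0"
    and mu_pos: "mu > 0"
    and x_argmin: "\<And>k z.
        lam * real (l0norm (x k)) + L / 2 * (norm (x k - y k + (1 / L) *\<^sub>R grad (y k)))\<^sup>2
          + mu / 2 * (norm (x k - y k))\<^sup>2
        \<le> lam * real (l0norm z) + L / 2 * (norm (z - y k + (1 / L) *\<^sub>R grad (y k)))\<^sup>2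
          + mu / 2 * (norm (z - y k))\<^sup>2"
    and H_sym: "\<And>k. transpose (Hm k) = Hm k"
    and H_pd: "\<And>k v. v \<noteq> 0 \<Longrightarrow> v \<bullet> (Hm k *v v) > 0"
    and alpha_nonneg: "\<And>k. alpha k \<ge> 0"
    and y_next: "\<And>k. y (Suc k) =
        closest_point (coord_sub (zero_idx (x k))) (x k - alpha k *\<^sub>R (Hm k *v grad (x k)))"
    and descent: "\<And>k. f (y (Suc k)) \<le> f (x k)"
  shows "(\<forall>k. f (x (Suc k)) + lam * real (l0norm (x (Suc k)))
              \<le> f (x k) + lam * real (l0norm (x k)))
       \<and> summable (\<lambda>k. (norm (x (Suc k) - y (Suc k)))\<^sup>2)
       \<and> (\<lambda>k. norm (x k - y k)) \<longlonglongrightarrow> 0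
       \<and> (\<exists>K. \<forall>k\<ge>K. zero_idx (x k) = zero_idx (x K))"
proof -
  define H where "H k = f (x k) + lam * real (l0norm (x k))" for k
  have decrease: "H (Suc k) + mu / 2 * (norm (x (Suc k) - y (Suc k)))\<^sup>2 \<le> H k" for k
  proof -
    have "H (Suc k) + mu / 2 * (norm (x (Suc k) - y (Suc k)))\<^sup>2
        \<le> f (y (Suc k)) + lam * real (l0norm (y (Suc k)))"
      unfolding H_def by (rule proximal_gradient_sufficient_decrease[OF grad lipschitz L_pos])
        (use x_argmin[of "Suc k" "y (Suc k)"] in simp)
    also have "\<dots> \<le> H k"
      unfolding H_def using descent[of k] l0norm_closest_point_coord_sub_le lam_pos
      by (intro add_mono mult_left_mono) (simp_all add: y_next)
    finally show ?thesis .
  qed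
  have H_decreasing: "H (Suc k) \<le> H k" for k
    by (rule order_trans[OF _ decrease[of k]]) (use mu_pos in simp)
  obtain m where "\<And>z. m \<le> f z"
    using bdd_below by blast
  then have "summable (\<lambda>k. mu / 2 * (norm (x (Suc k) - y (Suc k)))\<^sup>2)"
    using mu_pos lam_pos
    by (intro summable_decrements_bounded_below[of _ H m] decrease) (simp_all add: H_def add_increasing2)
  then have sq_summable: "summable (\<lambda>k. (norm (x (Suc k) - y (Suc k)))\<^sup>2)"
    using mu_pos by (simp add: summable_cmult_iff)
  have close: "(\<lambda>k. norm (x k - y k)) \<longlonglongrightarrow> 0"
    using tendsto_real_sqrt[OF summable_LIMSEQ_zero[OF sq_summable]]
    by (intro LIMSEQ_imp_Suc[of "\<lambda>k. norm (x k - y k)"]) simp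
  have "lam / (L + mu) > 0"
    using lam_pos L_pos mu_pos by simp
  moreover have "lam / (L + mu) \<le> (x k $ i)\<^sup>2" if "x k $ i \<noteq> 0" for k i
    using l0_proximal_minimizer_threshold[OF x_argmin that] L_pos mu_pos
    by (simp add: pos_divide_le_eq mult.commute)
  moreover have "zero_idx (x k) \<subseteq> zero_idx (y (Suc k))" for k
    unfolding y_next by (rule zero_idx_closest_point_coord_sub)
  ultimately have "\<exists>K. \<forall>k\<ge>K. zero_idx (x k) = zero_idx (x K)"
    using zero_idx_eventually_constant close by blast
  with H_decreasing sq_summable close show ?thesis
    unfolding H_def by blast
qed

end
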